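(* For every join query $\mathcal R$ and every degree configuration $c\in\mathcal C_2$, $$\mathsf{MO}(\mathcal R(c))\le \mathsf{DBP}(\mathcal R(c),2)+|C|\log_{\mathrm{IN}}2,$$ where $C$ is a cover attaining the minimum in the definition of $\mathsf{DBP}(\mathcal R(c),2)$.
   Context: A join query consists of a finite set $\mathcal R$ of relations; each $R$ is a finite set of tuples over attribute set $\mathsf{attr}(R)$; $\mathcal A=\bigcup_R\mathsf{attr}(R)$. $\mathrm{IN}=\sum_{R\in\mathcal R}|R|\ge2$ (input size of the original query), $\log=\log_{\mathrm{IN}}$. For a relation $S$, $A\subseteq\mathsf{attr}(S)$, $v\in\pi_A(S)$: $\mathsf{deg}(v,S,A)=|\{t\in S:\pi_A(t)=v\}|$; $d_{S,A}=\max_{v\in\pi_A(S)}\mathsf{deg}(v,S,A)$ for $A\ne\emptyset$, $d_{S,\emptyset}=|S|$; for $A\subseteq B\subseteq\mathsf{attr}(S)$, $d(A,B,S)=\log d_{\pi_B(S),A}$. Degree configurations: buckets $B_l=[2^l,2^{l+1})$, $l\in\mathbb N$, ordered by index; $c\in\mathcal C_2$ maps each $(R,A)$, $A\subseteq\mathsf{attr}(R)$, to a bucket with $A'\subseteq A\Rightarrow c(R,A)\le c(R,A')$, $c(R,\mathsf{attr}(R))=B_0$, $c(R,\emptyset)=B_{\lfloor\log_2|R|\rfloor}$; $R(c)=\{t\in R:\forall A\subseteq\mathsf{attr}(R),\ \mathsf{deg}(\pi_A(t),R,A)\in c(R,A)\}$, $\mathcal R(c)=\{R(c)\}$ (assumed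 nonempty). MO: for a set $\mathcal S$ of relations, variables $s_F$ ($F\subseteq\mathcal A$), constraints $s_\emptyset=0$; $s_F\le s_{F'}$ for $F\subseteq F'$; $s_{B\cup E}\le s_{A\cup E}+d(A,B,S)$ for all $S\in\mathcal S$, $E\subseteq\mathcal A$, $A\subseteq B\subseteq\mathsf{attr}(S)$; $\mathsf{MO}(\mathcal S)=\max s_{\mathcal A}$. DBP: a cover is a set $C$ of pairs $(S,A)$, $S\in\mathcal S$, $A\subseteq\mathsf{attr}(S)$, with $\bigcup_{(S,A)\in C}A=\mathcal A$; $O_{C,L}$ is the optimal value of minimizing $\sum_{a\in\mathcal A}v_a$ over real $v_a\ge0$ with $\sum_{a\in A'}v_a\ge\log(d_{\pi_A(S),A\setminus A'}/L)$ for all $(S,A)\in C$, $A'\subseteq A$; $\mathsf{DBP}(\mathcal S,L)=\min_C O_{C,L}$. *)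

theory Defs
  imports Complex_Main
begin

text \<open>A relation: its attribute set together with its set of tuples; a tuple is a
  finite map from attributes to values whose domain is the attribute set.\<close>
type_synonym ('a, 'v) rel = "'a set \<times> ('a \<rightharpoonup> 'v) set"

definition attr :: "('a, 'v) rel \<Rightarrow> 'a set" where "attr R = fst R"
definition tup :: "('a, 'v) rel \<Rightarrow> ('a \<rightharpoonup> 'v) set" where "tup R = snd R"

definition join_query :: "('a, 'v) rel set \<Rightarrow> bool" where
  "join_query Q \<longleftrightarrow> finite Q \<and>
     (\<forall>R\<in>Q. finite (attr R) \<and> finite (tup R) \<and> (\<forall>t\<in>tup R. dom t = attr R))"

definition IN :: "('a, 'v) rel set \<Rightarrow> nat" where
  "IN Q = (\<Sum>R\<in>Q. card (tup R))"

definition attrs :: "('a, 'v) rel set \<Rightarrow> 'a set" where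
  "attrs Q = \<Union> (attr ` Q)"

definition proj_rel :: "'a set \<Rightarrow> ('a, 'v) rel \<Rightarrow> ('a, 'v) rel" where
  "proj_rel B S = (B, (\<lambda>t. t |` B) ` tup S)"

definition deg :: "('a \<rightharpoonup> 'v) \<Rightarrow> ('a, 'v) rel \<Rightarrow> 'a set \<Rightarrow> nat" where
  "deg v S A = card {t \<in> tup S. t |` A = v}"

definition maxdeg :: "('a, 'v) rel \<Rightarrow> 'a set \<Rightarrow> nat" where
  "maxdeg S A = (if A = {} then card (tup S)
                 else Max ((\<lambda>v. deg v S A) ` ((\<lambda>t. t |` A) ` tup S)))"

definition dlog :: "real \<Rightarrow> 'a set \<Rightarrow> 'a set \<Rightarrow> ('a, 'v) rel \<Rightarrow> real" where
  "dlog N A B S = log N (real (maxdeg (proj_rel B S) A))"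

definition bucket :: "nat \<Rightarrow> nat set" where
  "bucket l = {x. 2 ^ l \<le> x \<and> x < 2 ^ (l + 1)}"

text \<open>Degree configurations \<open>c \<in> C_2\<close>, buckets represented by their index.\<close>
definition degree_config :: "('a, 'v) rel set \<Rightarrow> (('a, 'v) rel \<Rightarrow> 'a set \<Rightarrow> nat) \<Rightarrow> bool" where
  "degree_config Q c \<longleftrightarrow> (\<forall>R\<in>Q.
      (\<forall>A A'. A \<subseteq> attr R \<longrightarrow> A' \<subseteq> A \<longrightarrow> c R A \<le> c R A') \<and>
      c R (attr R) = 0 \<and>
      c R {} = nat \<lfloor>log 2 (real (card (tup R)))\<rfloor>)"

definition restrict_conf :: "(('a, 'v) rel \<Rightarrow> 'a set \<Rightarrow> nat) \<Rightarrow> ('a, 'v) rel \<Rightarrow> ('a, 'v) rel" where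
  "restrict_conf c R = (attr R,
     {t \<in> tup R. \<forall>A. A \<subseteq> attr R \<longrightarrow> deg (t |` A) R A \<in> bucket (c R A)})"

definition query_conf :: "('a, 'v) rel set \<Rightarrow> (('a, 'v) rel \<Rightarrow> 'a set \<Rightarrow> nat) \<Rightarrow> ('a, 'v) rel set" where
  "query_conf Q c = restrict_conf c ` Q"

text \<open>MO: feasibility and optimal value (the LP is bounded, so the supremum is the max).\<close>
definition mo_feasible :: "real \<Rightarrow> ('a, 'v) rel set \<Rightarrow> ('a set \<Rightarrow> real) \<Rightarrow> bool" where
  "mo_feasible N S s \<longleftrightarrow>
     s {} = 0 \<and>
     (\<forall>F F'. F \<subseteq> F' \<longrightarrow> F' \<subseteq> attrs S \<longrightarrow> s F \<le> s F') \<and>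
     (\<forall>R\<in>S. \<forall>E A B. E \<subseteq> attrs S \<longrightarrow> A \<subseteq> B \<longrightarrow> B \<subseteq> attr R \<longrightarrow>
         s (B \<union> E) \<le> s (A \<union> E) + dlog N A B R)"

definition MO :: "real \<Rightarrow> ('a, 'v) rel set \<Rightarrow> real" where
  "MO N S = Sup {s (attrs S) | s. mo_feasible N S s}"

definition is_cover :: "('a, 'v) rel set \<Rightarrow> (('a, 'v) rel \<times> 'a set) set \<Rightarrow> bool" where
  "is_cover S C \<longleftrightarrow> (\<forall>(R, A)\<in>C. R \<in> S \<and> A \<subseteq> attr R) \<and> \<Union> (snd ` C) = attrs S"

definition O_val :: "real \<Rightarrow> ('a, 'v) rel set \<Rightarrow> (('a, 'v) rel \<times> 'a set) set \<Rightarrow> real \<Rightarrow> real" where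
  "O_val N S C L = Inf {(\<Sum>a\<in>attrs S. v a) | v.
      (\<forall>a\<in>attrs S. 0 \<le> v a) \<and>
      (\<forall>(R, A)\<in>C. \<forall>A'. A' \<subseteq> A \<longrightarrow>
          (\<Sum>a\<in>A'. v a) \<ge> log N (real (maxdeg (proj_rel A R) (A - A')) / L))}"

definition DBP :: "real \<Rightarrow> ('a, 'v) rel set \<Rightarrow> real \<Rightarrow> real" where
  "DBP N S L = Inf {O_val N S C L | C. is_cover S C}"

end

theory Submission
  imports Defs
begin

text \<open>Let \<open>s\<close> be MO-feasible and \<open>v\<close> feasible for the DBP program of a cover \<open>C\<close>.
  Adding the attributes \<open>A\<close> of a cover pair \<open>(R, A)\<close> to an already covered set \<open>E\<close>
  raises \<open>s\<close> by at most \<open>log d_{\<pi>_A(R), A \<inter> E}\<close>, and the DBP constraint for \<open>A' = A - E\<close>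
  bounds this by \<open>\<Sum>_{A - E} v + log L\<close>. Summing over the pairs of \<open>C\<close> gives
  \<open>s(\<A>) \<le> \<Sum>_\<A> v + |C| log L\<close>, and taking sup over \<open>s\<close> and inf over \<open>v\<close> proves
  \<open>MO \<le> O_{C,L} + |C| log L\<close> for every \<open>L \<ge> 1\<close>.\<close>

definition dbp_feasible ::
    "real \<Rightarrow> ('a, 'v) rel set \<Rightarrow> (('a, 'v) rel \<times> 'a set) set \<Rightarrow> real \<Rightarrow> ('a \<Rightarrow> real) \<Rightarrow> bool" where
  "dbp_feasible N S C L v \<longleftrightarrow> (\<forall>a\<in>attrs S. 0 \<le> v a) \<and>
     (\<forall>(R, A)\<in>C. \<forall>A'. A' \<subseteq> A \<longrightarrow>
        log N (real (maxdeg (proj_rel A R) (A - A')) / L) \<le> (\<Sum>a\<in>A'. v a))"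

lemma dbp_feasibleD:
  assumes "dbp_feasible N S C L v"
  shows "a \<in> attrs S \<Longrightarrow> 0 \<le> v a"
    and "(R, A) \<in> C \<Longrightarrow> A' \<subseteq> A \<Longrightarrow>
      log N (real (maxdeg (proj_rel A R) (A - A')) / L) \<le> (\<Sum>a\<in>A'. v a)"
  using assms unfolding dbp_feasible_def by blast+

lemma O_val_eq_Inf_dbp_feasible:
  "O_val N S C L = Inf {(\<Sum>a\<in>attrs S. v a) | v. dbp_feasible N S C L v}"
  by (simp add: O_val_def dbp_feasible_def)

lemma is_cover_memberD:
  assumes "is_cover S C" and "(R, A) \<in> C"
  shows "R \<in> S" and "A \<subseteq> attr R" and "A \<subseteq> attrs S"
proof -
  show "R \<in> S" and "A \<subseteq> attr R"
    using assms by (auto simp: is_cover_def)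
  then show "A \<subseteq> attrs S"
    by (auto simp: attrs_def)
qed

lemma is_cover_finite_snd:
  assumes "is_cover S C" and "\<forall>R\<in>S. finite (attr R)" and "x \<in> C"
  shows "finite (snd x)"
proof -
  obtain R A where x: "x = (R, A)"
    by (cases x)
  with assms have "R \<in> S" and "A \<subseteq> attr R"
    using is_cover_memberD by blast+
  with assms(2) x show ?thesis
    by (simp add: finite_subset)
qed

lemma is_cover_finite:
  assumes "is_cover S C" and "finite S" and "\<forall>R\<in>S. finite (attr R)"
  shows "finite C"
proof (rule finite_subset)
  show "C \<subseteq> Sigma S (\<lambda>R. Pow (attr R))"
    using assms(1) by (auto simp: is_cover_def)
  show "finite (Sigma S (\<lambda>R. Pow (attr R)))"
    using assms(2,3) by auto
qed

lemma log_of_nat_nonneg: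
  fixes N :: real
  assumes "1 < N"
  shows "0 \<le> log N (real n)"
  using assms by (cases "n = 0") (simp_all add: log_def zero_le_log_cancel_iff)

lemma maxdeg_proj_self_le_1:
  assumes "finite (tup R)" and "tup R \<noteq> {}"
  shows "maxdeg (proj_rel A R) A \<le> 1"
proof (cases "A = {}")
  case True
  then have "tup (proj_rel A R) \<subseteq> {Map.empty}"
    by (auto simp: proj_rel_def tup_def)
  then have "card (tup (proj_rel A R)) \<le> card {Map.empty :: 'a \<rightharpoonup> 'b}"
    by (rule card_mono[rotated]) simp
  with True show ?thesis
    by (simp add: maxdeg_def)
next
  case False
  have T: "tup (proj_rel A R) = (\<lambda>t. t |` A) ` tup R"
    by (simp add: proj_rel_def tup_def)
  have "deg u (proj_rel A R) A \<le> 1" for u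
  proof -
    have "{t \<in> tup (proj_rel A R). t |` A = u} \<subseteq> {u}"
      unfolding T by auto
    then have "card {t \<in> tup (proj_rel A R). t |` A = u} \<le> card {u}"
      by (rule card_mono[rotated]) simp
    then show ?thesis
      by (simp add: deg_def)
  qed
  with False assms show ?thesis
    by (simp add: maxdeg_def T Max_le_iff)
qed

lemma mo_feasible_zero:
  assumes "1 < N"
  shows "mo_feasible N S (\<lambda>_. 0)"
  using log_of_nat_nonneg[OF assms] by (simp add: mo_feasible_def dlog_def)

lemma mo_feasible_insert_cover_pair:
  assumes "mo_feasible N S s" and "R \<in> S" and "A \<subseteq> attr R" and "E \<subseteq> attrs S"
  shows "s (A \<union> E) \<le> s E + log N (real (maxdeg (proj_rel A R) (A \<inter> E)))"
proof -
  have "s (A \<union> E) \<le> s ((A \<inter> E) \<union> E) + dlog N (A \<inter> E) A R"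
    using assms unfolding mo_feasible_def by (meson Int_lower1)
  moreover have "(A \<inter> E) \<union> E = E"
    by auto
  ultimately show ?thesis
    by (simp add: dlog_def)
qed

lemma log_le_add_log_of_log_div_le:
  fixes N L m x :: real
  assumes "1 < N" and "1 \<le> L" and "0 \<le> m" and "0 \<le> x" and "log N (m / L) \<le> x"
  shows "log N m \<le> x + log N L"
proof (cases "m = 0")
  case True
  with assms show ?thesis
    by (simp add: log_def)
next
  case False
  with assms have "log N (m / L) = log N m - log N L"
    by (simp add: log_divide_pos)
  with assms show ?thesis
    by simp
qed

lemma mo_feasible_le_cover_sum:
  fixes N L :: real
  assumes N: "1 < N" and L: "1 \<le> L"
    and s: "mo_feasible N S s" and v: "dbp_feasible N S C L v"
    and cov: "is_cover S C" and fin_attr: "\<forall>R\<in>S. finite (attr R)"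
    and "finite D" and "D \<subseteq> C"
  shows "s (\<Union>(snd ` D)) \<le> (\<Sum>a\<in>\<Union>(snd ` D). v a) + real (card D) * log N L"
  using \<open>finite D\<close> \<open>D \<subseteq> C\<close>
proof (induction D rule: finite_induct)
  case empty
  with s show ?case
    by (simp add: mo_feasible_def)
next
  case (insert x F)
  obtain R A where x: "x = (R, A)"
    by (cases x)
  with insert.prems have RA: "(R, A) \<in> C"
    by auto
  note RA_props = is_cover_memberD[OF cov RA]
  define E where "E = \<Union>(snd ` F)"
  have "E \<subseteq> \<Union>(snd ` C)"
    using insert.prems by (auto simp: E_def)
  then have E_attrs: "E \<subseteq> attrs S"
    using cov by (simp add: is_cover_def)
  have fin_E: "finite E"
    unfolding E_def using insert.hyps(1) insert.prems is_cover_finite_snd[OF cov fin_attr]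
    by blast
  have fin_A: "finite A"
    using is_cover_finite_snd[OF cov fin_attr RA] by simp
  define m where "m = real (maxdeg (proj_rel A R) (A \<inter> E))"
  have "A - (A - E) = A \<inter> E"
    by auto
  then have "log N (m / L) \<le> (\<Sum>a\<in>A - E. v a)"
    using dbp_feasibleD(2)[OF v RA, of "A - E"] by (simp add: m_def)
  moreover have "0 \<le> (\<Sum>a\<in>A - E. v a)"
    using dbp_feasibleD(1)[OF v] RA_props(3) by (auto intro: sum_nonneg)
  ultimately have log_m: "log N m \<le> (\<Sum>a\<in>A - E. v a) + log N L"
    using log_le_add_log_of_log_div_le[OF N L] by (simp add: m_def)
  have sum_split: "(\<Sum>a\<in>A \<union> E. v a) = (\<Sum>a\<in>E. v a) + (\<Sum>a\<in>A - E. v a)"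
    using sum.union_disjoint[of E "A - E" v] fin_A fin_E by (simp add: Un_commute)
  have IH: "s E \<le> (\<Sum>a\<in>E. v a) + real (card F) * log N L"
    using insert by (simp add: E_def)
  have "s (A \<union> E) \<le> s E + log N m"
    using mo_feasible_insert_cover_pair[OF s RA_props(1,2) E_attrs] by (simp add: m_def)
  with IH log_m sum_split insert.hyps show ?case
    by (simp add: x E_def algebra_simps)
qed

lemma dbp_feasible_exists:
  fixes N L :: real and S :: "('a, 'v) rel set"
  assumes N: "1 < N" and L: "1 \<le> L"
    and cov: "is_cover S C" and fin_C: "finite C" and fin_attr: "\<forall>R\<in>S. finite (attr R)"
    and fin_tup: "\<forall>R\<in>S. finite (tup R) \<and> tup R \<noteq> {}"
  shows "\<exists>v. dbp_feasible N S C L v"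
proof -
  define T where "T x A' = log N (real (maxdeg (proj_rel (snd x) (fst x)) (snd x - A')) / L)"
    for x :: "('a, 'v) rel \<times> 'a set" and A'
  note fin_snd = is_cover_finite_snd[OF cov fin_attr]
  define M where "M = Max (insert 0 ((\<lambda>(x, A'). T x A') ` Sigma C (\<lambda>x. Pow (snd x))))"
  have fin_T: "finite (Sigma C (\<lambda>x. Pow (snd x)))"
    using fin_C fin_snd by auto
  have M_nonneg: "0 \<le> M"
    unfolding M_def using fin_T by simp
  have T_le_M: "T x A' \<le> M" if "x \<in> C" and "A' \<subseteq> snd x" for x A'
    unfolding M_def using that fin_T by (intro Max_ge) auto
  have "log N (real (maxdeg (proj_rel A R) (A - A')) / L) \<le> (\<Sum>a\<in>A'. M)"
    if RA: "(R, A) \<in> C" and A': "A' \<subseteq> A" for R A A'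
  proof (cases "A' = {}")
    case True
    have "maxdeg (proj_rel A R) A \<le> 1"
      using maxdeg_proj_self_le_1 fin_tup is_cover_memberD(1)[OF cov RA] by blast
    then consider "maxdeg (proj_rel A R) A = 0" | "maxdeg (proj_rel A R) A = 1"
      by linarith
    then show ?thesis
      using True N L by cases (simp_all add: log_def[of N 0])
  next
    case False
    with A' fin_snd[OF RA] have "1 \<le> card A'"
      by (simp add: Suc_le_eq card_gt_0_iff finite_subset)
    then have "M \<le> (\<Sum>a\<in>A'. M)"
      using M_nonneg by (simp add: mult_le_cancel_right1)
    moreover have "T (R, A) A' \<le> M"
      using T_le_M RA A' by simp
    ultimately show ?thesis
      by (simp add: T_def)
  qed
  with M_nonneg have "dbp_feasible N S C L (\<lambda>_. M)"
    by (auto simp: dbp_feasible_def)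
  then show ?thesis
    by blast
qed

lemma MO_le_O_val_add_card_log:
  fixes N L :: real
  assumes N: "1 < N" and L: "1 \<le> L"
    and fin_S: "finite S" and fin_attr: "\<forall>R\<in>S. finite (attr R)"
    and fin_tup: "\<forall>R\<in>S. finite (tup R) \<and> tup R \<noteq> {}" and cov: "is_cover S C"
  shows "MO N S \<le> O_val N S C L + real (card C) * log N L"
proof -
  have fin_C: "finite C"
    using is_cover_finite[OF cov fin_S fin_attr] .
  let ?W = "{s (attrs S) | s. mo_feasible N S s}"
  let ?V = "{(\<Sum>a\<in>attrs S. v a) | v. dbp_feasible N S C L v}"
  have V_ne: "?V \<noteq> {}"
    using dbp_feasible_exists[OF N L cov fin_C fin_attr fin_tup] by blast
  have W_ne: "?W \<noteq> {}"
    using mo_feasible_zero[OF N] by blast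
  have "w \<le> Inf ?V + real (card C) * log N L" if "w \<in> ?W" for w
  proof -
    obtain s where w: "w = s (attrs S)" and s: "mo_feasible N S s"
      using \<open>w \<in> ?W\<close> by blast
    have "w - real (card C) * log N L \<le> Inf ?V"
    proof (rule cInf_greatest[OF V_ne])
      fix y assume "y \<in> ?V"
      then obtain v where y: "y = (\<Sum>a\<in>attrs S. v a)" and v: "dbp_feasible N S C L v"
        by blast
      have "\<Union>(snd ` C) = attrs S"
        using cov by (simp add: is_cover_def)
      with mo_feasible_le_cover_sum[OF N L s v cov fin_attr fin_C subset_refl]
      show "w - real (card C) * log N L \<le> y"
        by (simp add: w y)
    qed
    then show ?thesis
      by simp
  qed
  then show ?thesis
    unfolding MO_def O_val_eq_Inf_dbp_feasible by (intro cSup_least[OF W_ne]) blast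
qed

lemma query_conf_wellformed:
  assumes "join_query Q" and "\<forall>R\<in>Q. tup (restrict_conf c R) \<noteq> {}"
  shows "finite (query_conf Q c)"
    and "\<forall>R\<in>query_conf Q c. finite (attr R)"
    and "\<forall>R\<in>query_conf Q c. finite (tup R) \<and> tup R \<noteq> {}"
  using assms
  by (auto simp: join_query_def query_conf_def restrict_conf_def attr_def tup_def)

theorem theorem4p3:
  fixes Q :: "('a, 'v) rel set"
    and c :: "('a, 'v) rel \<Rightarrow> 'a set \<Rightarrow> nat"
    and C :: "(('a, 'v) rel \<times> 'a set) set"
  assumes "join_query Q"
    and "IN Q \<ge> 2"
    and "degree_config Q c"
    and "\<forall>R\<in>Q. tup (restrict_conf c R) \<noteq> {}"
    and "is_cover (query_conf Q c) C"
    and "O_val (real (IN Q)) (query_conf Q c) C 2 = DBP (real (IN Q)) (query_conf Q c) 2"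
  shows "MO (real (IN Q)) (query_conf Q c)
           \<le> DBP (real (IN Q)) (query_conf Q c) 2 + real (card C) * log (real (IN Q)) 2"
proof -
  have "1 < real (IN Q)"
    using assms(2) by simp
  then have "MO (real (IN Q)) (query_conf Q c)
      \<le> O_val (real (IN Q)) (query_conf Q c) C 2 + real (card C) * log (real (IN Q)) 2"
    using MO_le_O_val_add_card_log[OF _ _ query_conf_wellformed[OF assms(1,4)] assms(5), of _ 2]
    by simp
  with assms(6) show ?thesis
    by simp
qed

end
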